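(* Let $\Omega\subset\mathbb{R}^3$ be a bounded domain and $T>0$. Let $\{g_{h,\Delta t}\}$ be a family, indexed by $h,\Delta t>0$ with $h,\Delta t\to0$, of functions piecewise constant in time, $g_{h,\Delta t}(t,x)=\sum_n g^n_h(x)\chi_{[n\Delta t,(n+1)\Delta t)}(t)$ with $g^n_h\in L^2(\Omega)$, which converges weak-$*$ in $L^\infty([0,T];L^2(\Omega))$ as $h,\Delta t\to0$ to some $g\in L^\infty([0,T];L^2(\Omega))$ that is weakly continuous in time in $L^1(\Omega)$, i.e. $\int_\Omega g(s,x)\phi(x)\,dx\to\int_\Omega g(t,x)\phi(x)\,dx$ as $s\to t$ for every $\phi\in L^\infty(\Omega)$. Assume moreover $\|D^+_tg_{h,\Delta t}\|_{L^2([0,T];L^1(\Omega))}\le C$ with $C$ independent of $h,\Delta t$, where $D^+_tg_{h,\Delta t}(t,x)=\frac{g^{n+1}_h(x)-g^n_h(x)}{\Delta t}$ for $t\in[n\Delta t,(n+1)\Delta t)$. Then, up to a subsequence, $\int_\Omega g_{h,\Delta t}(t,x)\phi(x)\,dx\to\int_\Omega g(t,x)\phi(x)\,dx$ as $h,\Delta t\to0$, for all $t\in[0,T]$ and all $\phi\in L^\infty(\Omega)$. *)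

theory Defs
  imports "HOL-Analysis.Analysis"
begin

type_synonym R3 = "real ^ 3"

abbreviation leb_on :: "'a::euclidean_space set \<Rightarrow> 'a measure" where
  "leb_on S \<equiv> lebesgue_on S"

definition L2_on :: "R3 set \<Rightarrow> (R3 \<Rightarrow> real) \<Rightarrow> bool" where
  "L2_on \<Omega> f \<longleftrightarrow> f \<in> borel_measurable (lebesgue_on \<Omega>)
       \<and> integrable (lebesgue_on \<Omega>) (\<lambda>x. (f x)\<^sup>2)"

definition Linf_on :: "R3 set \<Rightarrow> (R3 \<Rightarrow> real) \<Rightarrow> bool" where
  "Linf_on \<Omega> f \<longleftrightarrow> f \<in> borel_measurable (lebesgue_on \<Omega>)
       \<and> (\<exists>M. AE x in lebesgue_on \<Omega>. \<bar>f x\<bar> \<le> M)"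

text \<open>g belongs to L^infinity([0,T]; L^2(Omega)): weakly (hence, by Pettis and
  separability of L^2, strongly) measurable, with essentially bounded L^2 norm.\<close>
definition Linf_L2 :: "real \<Rightarrow> R3 set \<Rightarrow> (real \<Rightarrow> R3 \<Rightarrow> real) \<Rightarrow> bool" where
  "Linf_L2 T \<Omega> g \<longleftrightarrow>
     (\<forall>\<psi>. L2_on \<Omega> \<psi> \<longrightarrow>
        (\<lambda>t. LINT x|lebesgue_on \<Omega>. g t x * \<psi> x) \<in> borel_measurable (lebesgue_on {0..T}))
   \<and> (\<exists>M. AE t in lebesgue_on {0..T}. L2_on \<Omega> (g t) \<and> (LINT x|lebesgue_on \<Omega>. (g t x)\<^sup>2) \<le> M)"

text \<open>psi belongs to L^1([0,T]; L^2(Omega)) (the predual of L^infinity([0,T]; L^2(Omega))),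
  represented by a jointly measurable function.\<close>
definition L1_L2 :: "real \<Rightarrow> R3 set \<Rightarrow> (real \<Rightarrow> R3 \<Rightarrow> real) \<Rightarrow> bool" where
  "L1_L2 T \<Omega> \<psi> \<longleftrightarrow>
     (\<lambda>(t, x). \<psi> t x) \<in> borel_measurable (lebesgue_on ({0..T} \<times> \<Omega>))
   \<and> (AE t in lebesgue_on {0..T}. L2_on \<Omega> (\<psi> t))
   \<and> integrable (lebesgue_on {0..T}) (\<lambda>t. sqrt (LINT x|lebesgue_on \<Omega>. (\<psi> t x)\<^sup>2))"

definition pair_TO :: "real \<Rightarrow> R3 set \<Rightarrow> (real \<Rightarrow> R3 \<Rightarrow> real) \<Rightarrow> (real \<Rightarrow> R3 \<Rightarrow> real) \<Rightarrow> real" where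
  "pair_TO T \<Omega> f \<psi> = (LINT t|lebesgue_on {0..T}. LINT x|lebesgue_on \<Omega>. f t x * \<psi> t x)"

definition pc_time :: "real \<Rightarrow> (nat \<Rightarrow> R3 \<Rightarrow> real) \<Rightarrow> real \<Rightarrow> R3 \<Rightarrow> real" where
  "pc_time dt G t x = G (nat \<lfloor>t / dt\<rfloor>) x"

definition Dplus :: "real \<Rightarrow> (nat \<Rightarrow> R3 \<Rightarrow> real) \<Rightarrow> real \<Rightarrow> R3 \<Rightarrow> real" where
  "Dplus dt G t x = (G (Suc (nat \<lfloor>t / dt\<rfloor>)) x - G (nat \<lfloor>t / dt\<rfloor>) x) / dt"

definition norm_L2_L1 :: "real \<Rightarrow> R3 set \<Rightarrow> (real \<Rightarrow> R3 \<Rightarrow> real) \<Rightarrow> real" where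
  "norm_L2_L1 T \<Omega> f = sqrt (LINT t|lebesgue_on {0..T}. (LINT x|lebesgue_on \<Omega>. \<bar>f t x\<bar>)\<^sup>2)"

end

theory Submission
  imports Defs
begin

(*
  Fix t and a test function phi, which may be taken bounded and Borel, and let F_k(s) be the
  pairing of the k-th approximation at time s with phi. On the time grid the increments of F_k
  are bounded by sup |phi| times the L^1 norms c_n of g^(n+1) - g^n, and the bound on D_t^+ g
  says sum c_n^2 <= dt C^2. By Cauchy-Schwarz, F_k is Hoelder-1/2 continuous up to the grid size:
  |F_k(s) - F_k(t)| <= sup |phi| C sqrt (|s - t| + dt).
  Testing the weak-* convergence against psi(s,x) = 1_[a,b](s) phi(x) shows that the integrals
  of F_k over [a,b] converge to those of the continuous function s -> int g(s) phi. Averaging over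
  a short interval around t and using the uniform modulus gives F_k(t) -> int g(t) phi, so the
  whole sequence converges.
*)

lemma measurable_lebesgue_on_of_borel:
  fixes f :: "'a::euclidean_space \<Rightarrow> 'b"
  assumes "f \<in> borel \<rightarrow>\<^sub>M N"
  shows "f \<in> lebesgue_on S \<rightarrow>\<^sub>M N"
  using measurable_completion[of f lborel N] assms by (simp add: measurable_restrict_space1)

lemma integrable_step_function:
  fixes h :: "nat \<Rightarrow> real" and a b d :: real
  assumes "d > 0"
  shows "integrable (lebesgue_on {a..b}) (\<lambda>t. h (nat \<lfloor>t / d\<rfloor>))"
proof (rule finite_measure.integrable_const_bound)
  show "finite_measure (lebesgue_on {a..b})"
    by (rule finite_measure_lebesgue_on) simp
  have "\<bar>h (nat \<lfloor>t / d\<rfloor>)\<bar> \<le> (\<Sum>n\<le>nat \<lfloor>b / d\<rfloor>. \<bar>h n\<bar>)" if "t \<in> {a..b}" for t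
  proof (rule member_le_sum)
    show "nat \<lfloor>t / d\<rfloor> \<in> {..nat \<lfloor>b / d\<rfloor>}"
      using that assms by (auto intro!: nat_mono floor_mono divide_right_mono)
  qed auto
  then show "AE t in lebesgue_on {a..b}. norm (h (nat \<lfloor>t / d\<rfloor>)) \<le> (\<Sum>n\<le>nat \<lfloor>b / d\<rfloor>. \<bar>h n\<bar>)"
    by (simp add: AE_restrict_space_iff)
  show "(\<lambda>t. h (nat \<lfloor>t / d\<rfloor>)) \<in> borel_measurable (lebesgue_on {a..b})"
    by (rule measurable_lebesgue_on_of_borel) measurable
qed

lemma sum_le_integral_step_function:
  fixes h :: "nat \<Rightarrow> real" and d T :: real
  assumes d: "d > 0" and h_nonneg: "\<And>n. h n \<ge> 0" and N: "real N * d \<le> T"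
  shows "(\<Sum>n<N. d * h n) \<le> (LINT t|lebesgue_on {0..T}. h (nat \<lfloor>t / d\<rfloor>))"
proof -
  define f where "f t = h (nat \<lfloor>t / d\<rfloor>)" for t
  have f_integrable: "f integrable_on {a..b}" for a b
    unfolding f_def by (rule integrable_on_lebesgue_on[OF integrable_step_function[OF d]]) simp
  have integral_cell: "integral {real n * d..real (Suc n) * d} f = d * h n" for n
  proof -
    have "f x = h n" if "x \<in> {real n * d..real (Suc n) * d} - {real (Suc n) * d}" for x
    proof -
      have "real n \<le> x / d" "x / d < real n + 1"
        using that d by (auto simp: field_simps)
      then have "\<lfloor>x / d\<rfloor> = int n" by (simp add: floor_eq_iff)
      then show ?thesis by (simp add: f_def)
    qed
    then have "integral {real n * d..real (Suc n) * d} f = integral {real n * d..real (Suc n) * d} (\<lambda>_. h n)"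
      by (intro integral_spike[where S="{real (Suc n) * d}"]) auto
    then show ?thesis using d by (simp add: algebra_simps)
  qed
  have integral_cells: "(\<Sum>n<K. d * h n) = integral {0..real K * d} f" for K
  proof (induction K)
    case (Suc K)
    have "integral {0..real K * d} f + integral {real K * d..real (Suc K) * d} f
        = integral {0..real (Suc K) * d} f"
      using d by (intro Henstock_Kurzweil_Integration.integral_combine f_integrable) auto
    then show ?case using Suc integral_cell[of K] by simp
  qed simp
  have "integral {0..real N * d} f + integral {real N * d..T} f = integral {0..T} f"
    using d N by (intro Henstock_Kurzweil_Integration.integral_combine f_integrable) auto
  moreover have "integral {real N * d..T} f \<ge> 0"
    using f_integrable by (rule integral_nonneg) (simp add: f_def h_nonneg)
  moreover have "(LINT t|lebesgue_on {0..T}. f t) = integral {0..T} f"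
    unfolding f_def by (rule lebesgue_integral_eq_integral[OF integrable_step_function[OF d]]) simp
  ultimately show ?thesis using integral_cells[of N] by (simp add: f_def)
qed

definition L1_jump :: "'a measure \<Rightarrow> (nat \<Rightarrow> 'a \<Rightarrow> real) \<Rightarrow> nat \<Rightarrow> real" where
  "L1_jump M G n = (LINT x|M. \<bar>G (Suc n) x - G n x\<bar>)"

lemma sum_L1_jump_sq_le:
  fixes d T :: real
  assumes d: "d > 0" and N: "real N * d \<le> T"
  shows "(\<Sum>n<N. (L1_jump (lebesgue_on \<Omega>) G n)\<^sup>2) \<le> d * (norm_L2_L1 T \<Omega> (Dplus d G))\<^sup>2"
proof -
  let ?c = "L1_jump (lebesgue_on \<Omega>) G"
  have Dplus_L1: "(LINT x|lebesgue_on \<Omega>. \<bar>Dplus d G t x\<bar>) = ?c (nat \<lfloor>t / d\<rfloor>) / d" for t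
    using d by (simp add: Dplus_def L1_jump_def)
  have "(\<Sum>n<N. (?c n)\<^sup>2) / d = (\<Sum>n<N. d * (?c n / d)\<^sup>2)"
    using d by (simp add: sum_divide_distrib power2_eq_square)
  also have "\<dots> \<le> (LINT t|lebesgue_on {0..T}. (?c (nat \<lfloor>t / d\<rfloor>) / d)\<^sup>2)"
    by (rule sum_le_integral_step_function[OF d _ N]) simp
  also have "\<dots> = (norm_L2_L1 T \<Omega> (Dplus d G))\<^sup>2"
    by (simp add: norm_L2_L1_def Dplus_L1)
  finally show ?thesis
    using d by (simp add: divide_le_eq mult.commute)
qed

lemma sum_L1_jump_le:
  fixes d T :: real
  assumes d: "d > 0" and n: "real n * d \<le> T"
  shows "(\<Sum>j\<in>{m..<n}. L1_jump (lebesgue_on \<Omega>) G j)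
           \<le> norm_L2_L1 T \<Omega> (Dplus d G) * sqrt (real (n - m) * d)"
proof (rule power2_le_imp_le)
  let ?c = "L1_jump (lebesgue_on \<Omega>) G" and ?N = "norm_L2_L1 T \<Omega> (Dplus d G)"
  have "(\<Sum>j\<in>{m..<n}. ?c j)\<^sup>2 \<le> (\<Sum>j\<in>{m..<n}. (?c j)\<^sup>2) * real (n - m)"
    using sum_squared_le_sum_of_squares[of ?c "{m..<n}"] by simp
  also have "\<dots> \<le> (d * ?N\<^sup>2) * real (n - m)"
  proof (rule mult_right_mono)
    have "(\<Sum>j\<in>{m..<n}. (?c j)\<^sup>2) \<le> (\<Sum>j<n. (?c j)\<^sup>2)"
      by (intro sum_mono2) auto
    also have "\<dots> \<le> d * ?N\<^sup>2"
      by (rule sum_L1_jump_sq_le[OF d n])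
    finally show "(\<Sum>j\<in>{m..<n}. (?c j)\<^sup>2) \<le> d * ?N\<^sup>2" .
  qed simp
  also have "\<dots> = (?N * sqrt (real (n - m) * d))\<^sup>2"
    using d by (simp add: power_mult_distrib)
  finally show "(\<Sum>j\<in>{m..<n}. ?c j)\<^sup>2 \<le> (?N * sqrt (real (n - m) * d))\<^sup>2" .
  show "0 \<le> ?N * sqrt (real (n - m) * d)"
    using d by (simp add: norm_L2_L1_def)
qed

lemma integrable_if_square_integrable:
  fixes f :: "'a \<Rightarrow> real"
  assumes "finite_measure M" and "f \<in> borel_measurable M" and "integrable M (\<lambda>x. (f x)\<^sup>2)"
  shows "integrable M f"
proof (rule Bochner_Integration.integrable_bound)
  show "integrable M (\<lambda>x. 1 + (f x)\<^sup>2)"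
    using assms by (intro Bochner_Integration.integrable_add finite_measure.integrable_const)
  have "\<bar>y\<bar> \<le> 1 + y\<^sup>2" for y :: real
  proof -
    have "0 \<le> (\<bar>y\<bar> - 1)\<^sup>2"
      by simp
    then show ?thesis
      by (simp add: power2_eq_square algebra_simps)
  qed
  then show "AE x in M. norm (f x) \<le> norm (1 + (f x)\<^sup>2)"
    by simp
qed (use assms in simp)

lemma integrable_mult_bounded:
  fixes f \<phi> :: "'a \<Rightarrow> real"
  assumes "integrable M f" and "\<phi> \<in> borel_measurable M" and "\<And>x. \<bar>\<phi> x\<bar> \<le> B"
  shows "integrable M (\<lambda>x. f x * \<phi> x)"
proof (rule Bochner_Integration.integrable_bound)
  show "integrable M (\<lambda>x. B * \<bar>f x\<bar>)"
    using assms by (intro integrable_mult_right integrable_abs)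
  show "AE x in M. norm (f x * \<phi> x) \<le> norm (B * \<bar>f x\<bar>)"
    using assms(3) by (intro AE_I2) (metis abs_ge_self abs_ge_zero abs_mult mult.commute mult_left_mono
        order.trans real_norm_def)
qed (use assms in simp)

lemma abs_integral_mult_diff_le:
  fixes f g \<phi> :: "'a \<Rightarrow> real"
  assumes f: "integrable M f" and g: "integrable M g"
    and \<phi>: "\<phi> \<in> borel_measurable M" and B: "\<And>x. \<bar>\<phi> x\<bar> \<le> B"
  shows "\<bar>(LINT x|M. f x * \<phi> x) - (LINT x|M. g x * \<phi> x)\<bar> \<le> B * (LINT x|M. \<bar>f x - g x\<bar>)"
proof -
  have fg: "integrable M (\<lambda>x. f x - g x)"
    using f g by simp
  have "(LINT x|M. f x * \<phi> x) - (LINT x|M. g x * \<phi> x) = (LINT x|M. (f x - g x) * \<phi> x)"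
    using integrable_mult_bounded[OF f \<phi> B] integrable_mult_bounded[OF g \<phi> B]
    by (simp add: left_diff_distrib)
  also have "\<bar>\<dots>\<bar> \<le> (LINT x|M. \<bar>(f x - g x) * \<phi> x\<bar>)"
    by (rule integral_abs_bound)
  also have "\<dots> \<le> (LINT x|M. B * \<bar>f x - g x\<bar>)"
    using B by (intro integral_mono integrable_abs integrable_mult_bounded[OF fg \<phi> B] integrable_mult_right fg)
      (metis abs_ge_zero abs_mult mult.commute mult_left_mono)
  finally show ?thesis
    by simp
qed

lemma abs_integral_mult_diff_le_sum_L1_jump:
  fixes G :: "nat \<Rightarrow> 'a \<Rightarrow> real" and \<phi> :: "'a \<Rightarrow> real"
  assumes G: "\<And>n. integrable M (G n)" and \<phi>: "\<phi> \<in> borel_measurable M" and B: "\<And>x. \<bar>\<phi> x\<bar> \<le> B"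
    and "m \<le> n"
  shows "\<bar>(LINT x|M. G n x * \<phi> x) - (LINT x|M. G m x * \<phi> x)\<bar> \<le> B * (\<Sum>j\<in>{m..<n}. L1_jump M G j)"
proof -
  define H where "H j = (LINT x|M. G j x * \<phi> x)" for j
  have "\<bar>H n - H m\<bar> = \<bar>\<Sum>j\<in>{m..<n}. H (Suc j) - H j\<bar>"
    using sum_Suc_diff'[OF \<open>m \<le> n\<close>, of H] by simp
  also have "\<dots> \<le> (\<Sum>j\<in>{m..<n}. \<bar>H (Suc j) - H j\<bar>)"
    by (rule sum_abs)
  also have "\<dots> \<le> (\<Sum>j\<in>{m..<n}. B * L1_jump M G j)"
    unfolding H_def L1_jump_def by (intro sum_mono abs_integral_mult_diff_le G \<phi> B)
  finally show ?thesis
    by (simp add: H_def sum_distrib_left)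
qed

lemma abs_pairing_pc_time_diff_le:
  fixes G :: "nat \<Rightarrow> R3 \<Rightarrow> real" and d s t T :: real
  assumes \<Omega>: "\<Omega> \<in> lmeasurable" and G: "\<And>n. L2_on \<Omega> (G n)"
    and \<phi>: "\<phi> \<in> borel_measurable (lebesgue_on \<Omega>)" and B: "\<And>x. \<bar>\<phi> x\<bar> \<le> B"
    and d: "d > 0" and C: "norm_L2_L1 T \<Omega> (Dplus d G) \<le> C"
    and s: "s \<in> {0..T}" and t: "t \<in> {0..T}"
  shows "\<bar>(LINT x|lebesgue_on \<Omega>. pc_time d G s x * \<phi> x) - (LINT x|lebesgue_on \<Omega>. pc_time d G t x * \<phi> x)\<bar>
           \<le> B * C * sqrt (\<bar>s - t\<bar> + d)"
proof -
  define H where "H u = (LINT x|lebesgue_on \<Omega>. pc_time d G u x * \<phi> x)" for u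
  have G_integrable: "integrable (lebesgue_on \<Omega>) (G n)" for n
    using G[of n] finite_measure_lebesgue_on[OF \<Omega>] by (auto simp: L2_on_def integrable_if_square_integrable)
  have B_nonneg: "B \<ge> 0"
    using B[of 0] by simp
  have N_nonneg: "norm_L2_L1 T \<Omega> (Dplus d G) \<ge> 0"
    by (simp add: norm_L2_L1_def)
  have ordered: "\<bar>H v - H u\<bar> \<le> B * C * sqrt (v - u + d)"
    if "0 \<le> u" "u \<le> v" "v \<le> T" for u v
  proof -
    define m n where "m = nat \<lfloor>u / d\<rfloor>" and "n = nat \<lfloor>v / d\<rfloor>"
    have "m \<le> n"
      unfolding m_def n_def using that d by (intro nat_mono floor_mono divide_right_mono) auto
    have "real n \<le> v / d"
      unfolding n_def using that d by simp
    moreover have "u / d < real m + 1"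
      unfolding m_def using that d by linarith
    ultimately have n_le: "real n * d \<le> v" and m_gt: "u - d < real m * d"
      using d by (simp_all add: field_simps)
    have "\<bar>H v - H u\<bar> \<le> B * (\<Sum>j\<in>{m..<n}. L1_jump (lebesgue_on \<Omega>) G j)"
      unfolding H_def pc_time_def m_def[symmetric] n_def[symmetric]
      by (rule abs_integral_mult_diff_le_sum_L1_jump[OF G_integrable \<phi> B \<open>m \<le> n\<close>])
    also have "\<dots> \<le> B * (norm_L2_L1 T \<Omega> (Dplus d G) * sqrt (real (n - m) * d))"
      using n_le that by (intro mult_left_mono B_nonneg sum_L1_jump_le[OF d]) auto
    also have "\<dots> \<le> B * (C * sqrt (v - u + d))"
    proof -
      have "real (n - m) * d \<le> v - u + d"
        using n_le m_gt \<open>m \<le> n\<close> by (simp add: left_diff_distrib)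
      then show ?thesis
        using B_nonneg N_nonneg C d by (intro mult_left_mono mult_mono) auto
    qed
    finally show ?thesis
      by (simp add: mult.assoc)
  qed
  show ?thesis
    using ordered[of s t] ordered[of t s] s t
    by (cases "s \<le> t") (auto simp: H_def abs_minus_commute)
qed

lemma Linf_on_bounded_borel_representative:
  assumes \<phi>: "Linf_on \<Omega> \<phi>" and \<Omega>: "\<Omega> \<in> sets lebesgue"
  obtains \<phi>' B where "\<phi>' \<in> borel_measurable borel" and "\<And>x. \<bar>\<phi>' x\<bar> \<le> B"
    and "AE x in lebesgue_on \<Omega>. \<phi> x = \<phi>' x"
proof -
  obtain B where \<phi>_meas: "\<phi> \<in> borel_measurable (lebesgue_on \<Omega>)"
    and \<phi>_bounded: "AE x in lebesgue_on \<Omega>. \<bar>\<phi> x\<bar> \<le> B"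
    using \<phi> unfolding Linf_on_def by blast
  have "(\<lambda>x. indicator \<Omega> x *\<^sub>R \<phi> x) \<in> borel_measurable lebesgue"
    using \<phi>_meas \<Omega> by (subst (asm) borel_measurable_restrict_space_iff) auto
  then obtain \<phi>1 where \<phi>1: "\<phi>1 \<in> borel_measurable lborel"
    and "AE x in lborel. indicator \<Omega> x *\<^sub>R \<phi> x = \<phi>1 x"
    using completion_ex_borel_measurable_real by blast
  from AE_completion[OF this(2)] have "AE x in lebesgue. x \<in> \<Omega> \<longrightarrow> \<phi> x = \<phi>1 x"
    by eventually_elim auto
  then have "AE x in lebesgue_on \<Omega>. \<phi> x = \<phi>1 x"
    using \<Omega> by (simp add: AE_restrict_space_iff)
  define \<phi>' where "\<phi>' x = max (- B) (min B (\<phi>1 x))" for x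
  have "\<phi>' \<in> borel_measurable borel"
    using \<phi>1 unfolding \<phi>'_def by measurable
  moreover have "\<bar>\<phi>' x\<bar> \<le> \<bar>B\<bar>" for x
    unfolding \<phi>'_def by auto
  moreover have "AE x in lebesgue_on \<Omega>. \<phi> x = \<phi>' x"
    using \<open>AE x in lebesgue_on \<Omega>. \<phi> x = \<phi>1 x\<close> \<phi>_bounded by eventually_elim (auto simp: \<phi>'_def)
  ultimately show ?thesis
    using that by blast
qed

lemma L1_L2_indicator_times:
  fixes a b T :: real
  assumes \<Omega>: "\<Omega> \<in> lmeasurable" and \<phi>: "\<phi> \<in> borel_measurable borel" and B: "\<And>x. \<bar>\<phi> x\<bar> \<le> B"
  shows "L1_L2 T \<Omega> (\<lambda>s x. indicator {a..b} s * \<phi> x)"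
proof -
  have "L2_on \<Omega> (\<lambda>x. indicator {a..b} s * \<phi> x)" for s
    unfolding L2_on_def
  proof
    show "(\<lambda>x. indicator {a..b} s * \<phi> x) \<in> borel_measurable (lebesgue_on \<Omega>)"
      by (rule measurable_lebesgue_on_of_borel) (use \<phi> in measurable)
    have "(indicator {a..b} s * \<phi> x)\<^sup>2 \<le> B\<^sup>2" for x
      using B[of x] order.trans[OF abs_ge_zero B[of x]] by (simp add: indicator_def abs_le_square_iff[symmetric])
    then show "integrable (lebesgue_on \<Omega>) (\<lambda>x. (indicator {a..b} s * \<phi> x)\<^sup>2)"
      by (intro finite_measure.integrable_const_bound[where B="B\<^sup>2"] finite_measure_lebesgue_on[OF \<Omega>]
          AE_I2 measurable_lebesgue_on_of_borel) (use \<phi> in simp_all)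
  qed
  moreover have "(\<lambda>(s, x). indicator {a..b} s * \<phi> x) \<in> borel_measurable (lebesgue_on ({0..T} \<times> \<Omega>))"
  proof (rule measurable_lebesgue_on_of_borel)
    have "(\<lambda>(s, x). indicator {a..b} s * \<phi> x) \<in> borel_measurable (borel \<Otimes>\<^sub>M borel :: (real \<times> R3) measure)"
      using \<phi> by measurable
    then show "(\<lambda>(s, x). indicator {a..b} s * \<phi> x) \<in> borel_measurable borel"
      by (simp add: borel_prod)
  qed
  moreover have "integrable (lebesgue_on {0..T}) (\<lambda>s. sqrt (LINT x|lebesgue_on \<Omega>. (indicator {a..b} s * \<phi> x)\<^sup>2))"
  proof -
    define K where "K = sqrt (LINT x|lebesgue_on \<Omega>. (\<phi> x)\<^sup>2)"
    have "(\<lambda>s. sqrt (LINT x|lebesgue_on \<Omega>. (indicator {a..b} s * \<phi> x)\<^sup>2)) = (\<lambda>s. indicator {a..b} s * K)"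
      by (simp add: fun_eq_iff indicator_def K_def)
    moreover have "integrable (lebesgue_on {0..T}) (\<lambda>s. indicator {a..b} s * K)"
      by (intro finite_measure.integrable_const_bound[where B="\<bar>K\<bar>"] finite_measure_lebesgue_on AE_I2
          measurable_lebesgue_on_of_borel) (auto simp: indicator_def)
    ultimately show ?thesis
      by simp
  qed
  ultimately show ?thesis
    by (simp add: L1_L2_def)
qed

lemma pair_TO_indicator_times:
  fixes a b T :: real
  assumes "0 \<le> a" and "b \<le> T"
  shows "pair_TO T \<Omega> f (\<lambda>s x. indicator {a..b} s * \<phi> x)
           = (LINT s|lebesgue_on {a..b}. LINT x|lebesgue_on \<Omega>. f s x * \<phi> x)"
proof -
  define I where "I s = (LINT x|lebesgue_on \<Omega>. f s x * \<phi> x)" for s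
  have "(LINT x|lebesgue_on \<Omega>. f s x * (indicator {a..b} s * \<phi> x)) = indicator {a..b} s * I s" for s
  proof -
    have "(\<lambda>x. f s x * (indicator {a..b} s * \<phi> x)) = (\<lambda>x. indicator {a..b} s * (f s x * \<phi> x))"
      by (simp add: fun_eq_iff mult.left_commute)
    then show ?thesis unfolding I_def by simp
  qed
  then have "pair_TO T \<Omega> f (\<lambda>s x. indicator {a..b} s * \<phi> x) = (LINT s|lebesgue_on {0..T}. indicator {a..b} s * I s)"
    by (simp add: pair_TO_def)
  also have "\<dots> = (LINT s|lebesgue. indicator {0..T} s *\<^sub>R (indicator {a..b} s * I s))"
    by (rule integral_restrict_space) simp
  also have "\<dots> = (LINT s|lebesgue. indicator {a..b} s *\<^sub>R I s)"
    using assms by (intro Bochner_Integration.integral_cong) (auto simp: indicator_def)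
  also have "\<dots> = (LINT s|lebesgue_on {a..b}. I s)"
    by (rule integral_restrict_space[symmetric]) simp
  finally show ?thesis
    by (simp add: I_def)
qed

lemma abs_average_diff_le:
  fixes f :: "real \<Rightarrow> real"
  assumes \<delta>: "\<delta> > 0" and f: "integrable (lebesgue_on {a..a + \<delta>}) f"
    and close: "\<And>s. s \<in> {a..a + \<delta>} \<Longrightarrow> \<bar>f s - c\<bar> \<le> e"
  shows "\<bar>(LINT s|lebesgue_on {a..a + \<delta>}. f s) / \<delta> - c\<bar> \<le> e"
proof -
  have f_HK: "f integrable_on {a..a + \<delta>}"
    using f by (rule integrable_on_lebesgue_on) simp
  have "(LINT s|lebesgue_on {a..a + \<delta>}. f s) - \<delta> * c = integral {a..a + \<delta>} (\<lambda>s. f s - c)"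
    using \<delta> by (simp add: lebesgue_integral_eq_integral[OF f] integral_diff[OF f_HK integrable_const_ivl])
  also have "\<bar>\<dots>\<bar> \<le> e * \<delta>"
    using has_integral_bound_real[of e "{}" "\<lambda>s. f s - c" _ a "a + \<delta>"]
      integrable_integral[OF integrable_diff[OF f_HK integrable_const_ivl]]
      \<delta> close order.trans[OF abs_ge_zero close[of a]]
    by auto
  finally show ?thesis
    using \<delta> by (simp add: field_simps abs_le_iff)
qed

lemma eventually_abs_diff_less_of_interval_integrals:
  fixes F :: "nat \<Rightarrow> real \<Rightarrow> real" and f :: "real \<Rightarrow> real" and d :: "nat \<Rightarrow> real"
  assumes \<delta>: "\<delta> > 0" and t: "t \<in> {a..a + \<delta>}"
    and f: "integrable (lebesgue_on {a..a + \<delta>}) f"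
    and f_close: "\<And>s. s \<in> {a..a + \<delta>} \<Longrightarrow> \<bar>f s - f t\<bar> \<le> e"
    and F_integrable: "\<And>k. integrable (lebesgue_on {a..a + \<delta>}) (F k)"
    and F_integrals: "(\<lambda>k. LINT s|lebesgue_on {a..a + \<delta>}. F k s)
                        \<longlonglongrightarrow> (LINT s|lebesgue_on {a..a + \<delta>}. f s)"
    and F_modulus: "\<And>k s. s \<in> {a..a + \<delta>} \<Longrightarrow> \<bar>F k s - F k t\<bar> \<le> K * sqrt (\<bar>s - t\<bar> + d k)"
    and d_nonneg: "\<And>k. d k \<ge> 0" and d: "d \<longlonglongrightarrow> 0" and "\<epsilon> > 0"
  shows "eventually (\<lambda>k. \<bar>F k t - f t\<bar> < \<bar>K\<bar> * sqrt (2 * \<delta>) + e + \<epsilon>) sequentially"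
proof -
  define avg where "avg u = (LINT s|lebesgue_on {a..a + \<delta>}. u s) / \<delta>" for u
  have f_avg: "\<bar>avg f - f t\<bar> \<le> e"
    unfolding avg_def using \<delta> f f_close by (rule abs_average_diff_le)
  have F_avg: "\<bar>avg (F k) - F k t\<bar> \<le> \<bar>K\<bar> * sqrt (2 * \<delta>)" if "d k \<le> \<delta>" for k
    unfolding avg_def using \<delta> F_integrable
  proof (rule abs_average_diff_le)
    fix s assume s: "s \<in> {a..a + \<delta>}"
    then have "\<bar>F k s - F k t\<bar> \<le> K * sqrt (\<bar>s - t\<bar> + d k)"
      by (rule F_modulus)
    also have "\<dots> \<le> \<bar>K\<bar> * sqrt (2 * \<delta>)"
      using s t that d_nonneg[of k] by (intro mult_mono) auto
    finally show "\<bar>F k s - F k t\<bar> \<le> \<bar>K\<bar> * sqrt (2 * \<delta>)" .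
  qed
  have "(\<lambda>k. avg (F k)) \<longlonglongrightarrow> avg f"
    unfolding avg_def using \<delta> by (intro tendsto_divide tendsto_const F_integrals) auto
  then have "eventually (\<lambda>k. \<bar>avg (F k) - avg f\<bar> < \<epsilon>) sequentially"
    using \<open>\<epsilon> > 0\<close> by (auto dest!: tendstoD simp: dist_real_def)
  moreover have "eventually (\<lambda>k. d k \<le> \<delta>) sequentially"
    using order_tendstoD(2)[OF d \<delta>] by (auto elim: eventually_mono)
  ultimately show ?thesis
  proof eventually_elim
    case (elim k)
    then show ?case
      using F_avg[of k] f_avg by linarith
  qed
qed

lemma LIMSEQ_of_LIMSEQ_interval_integrals:
  fixes F :: "nat \<Rightarrow> real \<Rightarrow> real" and f :: "real \<Rightarrow> real" and d :: "nat \<Rightarrow> real"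
  assumes T: "T > 0" and t: "t \<in> {0..T}"
    and f: "continuous_on {0..T} f"
    and F_integrable: "\<And>k a b. integrable (lebesgue_on {a..b}) (F k)"
    and F_integrals: "\<And>a b. 0 \<le> a \<Longrightarrow> a < b \<Longrightarrow> b \<le> T \<Longrightarrow>
          (\<lambda>k. LINT s|lebesgue_on {a..b}. F k s) \<longlonglongrightarrow> (LINT s|lebesgue_on {a..b}. f s)"
    and F_modulus: "\<And>k s. s \<in> {0..T} \<Longrightarrow> \<bar>F k s - F k t\<bar> \<le> K * sqrt (\<bar>s - t\<bar> + d k)"
    and d_nonneg: "\<And>k. d k \<ge> 0" and d: "d \<longlonglongrightarrow> 0"
  shows "(\<lambda>k. F k t) \<longlonglongrightarrow> f t"
proof (rule tendstoI)
  fix \<eta> :: real assume "\<eta> > 0"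
  obtain \<delta>0 where "\<delta>0 > 0"
    and f_close: "\<And>s. s \<in> {0..T} \<Longrightarrow> dist s t < \<delta>0 \<Longrightarrow> dist (f s) (f t) < \<eta> / 4"
    using f t \<open>\<eta> > 0\<close> unfolding continuous_on_iff by (metis zero_less_divide_iff zero_less_numeral)
  define \<delta> where "\<delta> = min (min T (\<delta>0 / 2)) ((\<eta> / (4 * (\<bar>K\<bar> + 1)))\<^sup>2 / 2)"
  have "\<delta> > 0" "\<delta> \<le> T" "\<delta> < \<delta>0"
    unfolding \<delta>_def using T \<open>\<delta>0 > 0\<close> \<open>\<eta> > 0\<close> by auto
  have "\<bar>K\<bar> * sqrt (2 * \<delta>) \<le> \<bar>K\<bar> * (\<eta> / (4 * (\<bar>K\<bar> + 1)))"
    using \<open>\<eta> > 0\<close> by (intro mult_left_mono real_le_lsqrt) (auto simp: \<delta>_def)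
  also have "\<dots> < \<eta> / 4"
    using \<open>\<eta> > 0\<close> by (simp add: field_simps)
  finally have K_small: "\<bar>K\<bar> * sqrt (2 * \<delta>) < \<eta> / 4" .
  define a where "a = min t (T - \<delta>)"
  have I: "{a..a + \<delta>} \<subseteq> {0..T}" and "t \<in> {a..a + \<delta>}"
    using t \<open>\<delta> \<le> T\<close> \<open>\<delta> > 0\<close> by (auto simp: a_def)
  have "eventually (\<lambda>k. \<bar>F k t - f t\<bar> < \<bar>K\<bar> * sqrt (2 * \<delta>) + \<eta> / 4 + \<eta> / 4) sequentially"
  proof (rule eventually_abs_diff_less_of_interval_integrals
      [OF \<open>\<delta> > 0\<close> \<open>t \<in> {a..a + \<delta>}\<close> _ _ F_integrable _ _ d_nonneg d])
    show "integrable (lebesgue_on {a..a + \<delta>}) f"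
      by (intro continuous_imp_integrable_real continuous_on_subset[OF f I])
    show "\<bar>f s - f t\<bar> \<le> \<eta> / 4" if "s \<in> {a..a + \<delta>}" for s
    proof -
      have "\<bar>s - t\<bar> < \<delta>0"
        using that \<open>t \<in> {a..a + \<delta>}\<close> \<open>\<delta> < \<delta>0\<close> by auto
      then show ?thesis
        using f_close[of s] I that by (auto simp: dist_real_def)
    qed
    show "(\<lambda>k. LINT s|lebesgue_on {a..a + \<delta>}. F k s) \<longlonglongrightarrow> (LINT s|lebesgue_on {a..a + \<delta>}. f s)"
      using I \<open>\<delta> > 0\<close> by (intro F_integrals) auto
    show "\<bar>F k s - F k t\<bar> \<le> K * sqrt (\<bar>s - t\<bar> + d k)" if "s \<in> {a..a + \<delta>}" for k s
      using I that by (intro F_modulus) auto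
  qed (use \<open>\<eta> > 0\<close> in simp)
  then show "eventually (\<lambda>k. dist (F k t) (f t) < \<eta>) sequentially"
    by eventually_elim (use K_small in \<open>simp add: dist_real_def\<close>)
qed

lemma LIMSEQ_pairing_pc_time:
  fixes G :: "nat \<Rightarrow> nat \<Rightarrow> R3 \<Rightarrow> real" and g :: "real \<Rightarrow> R3 \<Rightarrow> real" and dt :: "nat \<Rightarrow> real"
  assumes \<Omega>: "\<Omega> \<in> lmeasurable" and T: "T > 0" and t: "t \<in> {0..T}"
    and dtpos: "\<And>k. dt k > 0" and dt0: "dt \<longlonglongrightarrow> 0"
    and GL2: "\<And>k n. L2_on \<Omega> (G k n)"
    and weakstar: "\<And>\<psi>. L1_L2 T \<Omega> \<psi> \<Longrightarrow>
        (\<lambda>k. pair_TO T \<Omega> (pc_time (dt k) (G k)) \<psi>) \<longlonglongrightarrow> pair_TO T \<Omega> g \<psi>"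
    and Dbound: "\<And>k. norm_L2_L1 T \<Omega> (Dplus (dt k) (G k)) \<le> C"
    and \<phi>: "\<phi> \<in> borel_measurable borel" and B: "\<And>x. \<bar>\<phi> x\<bar> \<le> B"
    and g_cont: "continuous_on {0..T} (\<lambda>s. LINT x|lebesgue_on \<Omega>. g s x * \<phi> x)"
  shows "(\<lambda>k. LINT x|lebesgue_on \<Omega>. pc_time (dt k) (G k) t x * \<phi> x)
           \<longlonglongrightarrow> (LINT x|lebesgue_on \<Omega>. g t x * \<phi> x)"
proof (rule LIMSEQ_of_LIMSEQ_interval_integrals[OF T t g_cont])
  show "integrable (lebesgue_on {a..b}) (\<lambda>s. LINT x|lebesgue_on \<Omega>. pc_time (dt k) (G k) s x * \<phi> x)" for k a b
    unfolding pc_time_def by (rule integrable_step_function[OF dtpos])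
  show "(\<lambda>k. LINT s|lebesgue_on {a..b}. LINT x|lebesgue_on \<Omega>. pc_time (dt k) (G k) s x * \<phi> x)
          \<longlonglongrightarrow> (LINT s|lebesgue_on {a..b}. LINT x|lebesgue_on \<Omega>. g s x * \<phi> x)"
    if "0 \<le> a" "a < b" "b \<le> T" for a b
    unfolding pair_TO_indicator_times[OF that(1,3), symmetric]
    by (rule weakstar[OF L1_L2_indicator_times[OF \<Omega> \<phi> B]])
  show "\<bar>(LINT x|lebesgue_on \<Omega>. pc_time (dt k) (G k) s x * \<phi> x)
          - (LINT x|lebesgue_on \<Omega>. pc_time (dt k) (G k) t x * \<phi> x)\<bar>
          \<le> B * C * sqrt (\<bar>s - t\<bar> + dt k)" if "s \<in> {0..T}" for k s
    using \<Omega> GL2 \<phi> B dtpos Dbound that t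
    by (intro abs_pairing_pc_time_diff_le measurable_lebesgue_on_of_borel)
  show "dt k \<ge> 0" for k
    using dtpos[of k] by simp
qed (rule dt0)

theorem lemmaA2:
  fixes \<Omega> :: "R3 set" and T :: real and C :: real
    and h dt :: "nat \<Rightarrow> real"
    and G :: "nat \<Rightarrow> nat \<Rightarrow> R3 \<Rightarrow> real"
    and g :: "real \<Rightarrow> R3 \<Rightarrow> real"
  assumes dom: "open \<Omega>" "connected \<Omega>" "bounded \<Omega>" "\<Omega> \<noteq> {}"
    and T: "T > 0"
    and hpos: "\<And>k. h k > 0" and dtpos: "\<And>k. dt k > 0"
    and h0: "h \<longlonglongrightarrow> 0" and dt0: "dt \<longlonglongrightarrow> 0"
    and GL2: "\<And>k n. L2_on \<Omega> (G k n)"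
    and gLinf: "Linf_L2 T \<Omega> g"
    and weakstar: "\<And>\<psi>. L1_L2 T \<Omega> \<psi> \<Longrightarrow>
        (\<lambda>k. pair_TO T \<Omega> (pc_time (dt k) (G k)) \<psi>) \<longlonglongrightarrow> pair_TO T \<Omega> g \<psi>"
    and gL1: "\<And>t. t \<in> {0..T} \<Longrightarrow> integrable (lebesgue_on \<Omega>) (g t)"
    and gcont: "\<And>\<phi> t. Linf_on \<Omega> \<phi> \<Longrightarrow> t \<in> {0..T} \<Longrightarrow>
        ((\<lambda>s. LINT x|lebesgue_on \<Omega>. g s x * \<phi> x) \<longlongrightarrow> (LINT x|lebesgue_on \<Omega>. g t x * \<phi> x))
          (at t within {0..T})"
    and Dbound: "\<And>k. norm_L2_L1 T \<Omega> (Dplus (dt k) (G k)) \<le> C"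
  shows "\<exists>r::nat \<Rightarrow> nat. strict_mono r \<and>
     (\<forall>t \<in> {0..T}. \<forall>\<phi>. Linf_on \<Omega> \<phi> \<longrightarrow>
        (\<lambda>k. LINT x|lebesgue_on \<Omega>. pc_time (dt (r k)) (G (r k)) t x * \<phi> x)
          \<longlonglongrightarrow> (LINT x|lebesgue_on \<Omega>. g t x * \<phi> x))"
proof -
  have \<Omega>: "\<Omega> \<in> lmeasurable"
    using dom by (intro lmeasurable_open) auto
  have "(\<lambda>k. LINT x|lebesgue_on \<Omega>. pc_time (dt k) (G k) t x * \<phi> x)
          \<longlonglongrightarrow> (LINT x|lebesgue_on \<Omega>. g t x * \<phi> x)"
    if t: "t \<in> {0..T}" and \<phi>: "Linf_on \<Omega> \<phi>" for t \<phi>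
  proof -
    obtain \<phi>' B where \<phi>': "\<phi>' \<in> borel_measurable borel" and B: "\<And>x. \<bar>\<phi>' x\<bar> \<le> B"
      and \<phi>_ae: "AE x in lebesgue_on \<Omega>. \<phi> x = \<phi>' x"
      using Linf_on_bounded_borel_representative[OF \<phi> fmeasurableD[OF \<Omega>]] by blast
    have \<phi>'_meas: "\<phi>' \<in> borel_measurable (lebesgue_on \<Omega>)"
      and \<phi>_meas: "\<phi> \<in> borel_measurable (lebesgue_on \<Omega>)"
      using \<phi>' \<phi> by (simp_all add: measurable_lebesgue_on_of_borel Linf_on_def)
    have "Linf_on \<Omega> \<phi>'"
      using \<phi>'_meas B by (auto simp: Linf_on_def)
    then have g_cont: "continuous_on {0..T} (\<lambda>s. LINT x|lebesgue_on \<Omega>. g s x * \<phi>' x)"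
      unfolding continuous_on_def using gcont by blast
    have "(\<lambda>k. LINT x|lebesgue_on \<Omega>. pc_time (dt k) (G k) t x * \<phi>' x)
            \<longlonglongrightarrow> (LINT x|lebesgue_on \<Omega>. g t x * \<phi>' x)"
      by (rule LIMSEQ_pairing_pc_time[OF \<Omega> T t dtpos dt0 GL2 weakstar Dbound \<phi>' B g_cont])
    moreover have "(LINT x|lebesgue_on \<Omega>. pc_time (dt k) (G k) t x * \<phi>' x)
        = (LINT x|lebesgue_on \<Omega>. pc_time (dt k) (G k) t x * \<phi> x)" for k
      using GL2 \<phi>_meas \<phi>'_meas \<phi>_ae unfolding pc_time_def
      by (intro integral_cong_AE borel_measurable_times) (auto simp: L2_on_def)
    moreover have "(LINT x|lebesgue_on \<Omega>. g t x * \<phi>' x) = (LINT x|lebesgue_on \<Omega>. g t x * \<phi> x)"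
      using gL1[OF t] \<phi>_meas \<phi>'_meas \<phi>_ae
      by (intro integral_cong_AE borel_measurable_times) auto
    ultimately show ?thesis
      by simp
  qed
  then show ?thesis
    by (intro exI[of _ id]) (auto simp: strict_mono_def)
qed

end
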